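(* Let $\{\mathcal{F}_\tau\}_{\tau=0}^t$ be a filtration and let $P(1),\ldots,P(t)\in\mathbb{R}^{d\times d}$ be symmetric random matrices with $P(\tau)$ $\mathcal{F}_\tau$-measurable. Suppose that for each $\tau=1,\ldots,t$, $\|P(\tau)\|_F\le c$ for some $c>0$ and $\lambda_{\min}(\mathbb{E}[P(\tau)\mid\mathcal{F}_{\tau-1}])\ge\phi^2>0$ almost surely. For any given $\delta\in(0,1)$, let $\lambda_t\ge4\sqrt2c\sqrt t\sqrt{\log\frac{4t^2}{\delta}}$. Then with probability at least $1-\delta/t^2$, $$\lambda_{\min}\Big(\sum_{\tau=1}^tP(\tau)+\lambda_tI\Big)\ge\phi^2t.$$
   Context: $\|A\|_F$ denotes the Frobenius norm of a matrix $A$ and $\lambda_{\min}$ the minimum eigenvalue of a symmetric matrix. *)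

theory Defs
  imports "HOL-Analysis.Analysis" "HOL-Probability.Probability"
begin

definition frob_norm :: "real^'d^'d \<Rightarrow> real" where
  "frob_norm A = sqrt (\<Sum>i\<in>UNIV. \<Sum>j\<in>UNIV. (A $ i $ j)^2)"

definition eigenvalues_real :: "real^'d^'d \<Rightarrow> real set" where
  "eigenvalues_real A = {l. \<exists>v. v \<noteq> 0 \<and> A *v v = l *\<^sub>R v}"

definition lambda_min :: "real^'d^'d \<Rightarrow> real" where
  "lambda_min A = Min (eigenvalues_real A)"

definition mat_cond_exp :: "'a measure \<Rightarrow> 'a measure \<Rightarrow> ('a \<Rightarrow> real^'d^'d) \<Rightarrow> 'a \<Rightarrow> real^'d^'d" where
  "mat_cond_exp M F X = (\<lambda>\<omega>. \<chi> i j. real_cond_exp M F (\<lambda>x. X x $ i $ j) \<omega>)"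

end

theory Submission
  imports Defs
begin

(*
  The increments D(tau) = P(tau) - E[P(tau) | F(tau - 1)] form a martingale difference
  sequence in the Euclidean space of d x d matrices with the Frobenius norm, bounded by 2c.
  For such a sequence the exponential moment E exp(alpha |S n|^2) of the partial sums gains
  at most a factor exp(2 alpha b^2) per step as long as 8 alpha b^2 n <= 1: in
  |S + D|^2 = |S|^2 + 2 S.D + |D|^2 the cross term has conditional mean zero, and its square
  is absorbed by slightly enlarging alpha. Markov's inequality then gives |S t| < lam outside
  an event of probability at most exp(1/4 - lam^2 / (32 c^2 t)) <= delta / t^2, and on the
  complement, for every vector v,
    v' (sum P + lam I) v >= sum v' E[P(tau) | F(tau - 1)] v - |S t| |v|^2 + lam |v|^2
                         >= phi^2 t |v|^2.
*)

section \<open>Symmetric matrices and their minimum eigenvalue\<close>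

lemma symmetric_matrix_iff: "transpose (X::'a::semiring_1^'n^'n) = X \<longleftrightarrow> (\<forall>i j. X $ i $ j = X $ j $ i)"
  by (auto simp: transpose_def vec_eq_iff)

lemma symmetric_matrix_inner:
  fixes A :: "real^'n^'n"
  assumes "transpose A = A"
  shows "(A *v x) \<bullet> y = x \<bullet> (A *v y)"
  by (metis assms dot_lmul_matrix transpose_matrix_vector)

lemma finite_eigenvalues_real:
  fixes A :: "real^'n^'n"
  assumes "transpose A = A"
  shows "finite (eigenvalues_real A)"
proof -
  have "\<forall>l\<in>eigenvalues_real A. \<exists>v. v \<noteq> 0 \<and> A *v v = l *\<^sub>R v"
    unfolding eigenvalues_real_def by blast
  then obtain vec where vec: "\<And>l. l \<in> eigenvalues_real A \<Longrightarrow> vec l \<noteq> 0 \<and> A *v vec l = l *\<^sub>R vec l"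
    by metis
  have "inj_on vec (eigenvalues_real A)"
  proof (rule inj_onI)
    fix l1 l2 assume "l1 \<in> eigenvalues_real A" "l2 \<in> eigenvalues_real A" "vec l1 = vec l2"
    then show "l1 = l2" using vec by (metis scaleR_cancel_right)
  qed
  moreover have "pairwise orthogonal (vec ` eigenvalues_real A)"
  proof (clarsimp simp: pairwise_def)
    fix l1 l2 assume l: "l1 \<in> eigenvalues_real A" "l2 \<in> eigenvalues_real A" "vec l1 \<noteq> vec l2"
    have "l1 * (vec l1 \<bullet> vec l2) = l2 * (vec l1 \<bullet> vec l2)"
      using symmetric_matrix_inner[OF assms, of "vec l1" "vec l2"] vec l by simp
    then show "orthogonal (vec l1) (vec l2)"
      using l unfolding orthogonal_def by auto
  qed
  moreover have "0 \<notin> vec ` eigenvalues_real A"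
    using vec by auto
  ultimately show ?thesis
    using pairwise_orthogonal_independent independent_imp_finite finite_imageD by blast
qed

lemma linear_coeff_eq_0_if_quadratic_nonneg:
  fixes a K :: real
  assumes "\<And>s. 0 \<le> 2 * s * a + s\<^sup>2 * K"
  shows "a = 0"
proof (rule ccontr)
  assume "a \<noteq> 0"
  define k where "k = \<bar>K\<bar> + 1"
  have k: "0 < k" "K \<le> k" unfolding k_def by auto
  have "0 \<le> 2 * (- a / k) * a + (- a / k)\<^sup>2 * K" by (rule assms)
  also have "\<dots> \<le> 2 * (- a / k) * a + (- a / k)\<^sup>2 * k"
    using k by (intro add_left_mono mult_left_mono) auto
  also have "\<dots> = - a\<^sup>2 / k"
    using k by (simp add: field_simps power2_eq_square)
  also have "\<dots> < 0" using \<open>a \<noteq> 0\<close> k by simp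
  finally show False by simp
qed

lemma Rayleigh_minimizer_eigenvector:
  fixes A :: "real^'n^'n"
  assumes sym: "transpose A = A"
    and min: "\<And>v. (u \<bullet> (A *v u)) * (v \<bullet> v) \<le> v \<bullet> (A *v v)" and unit: "u \<bullet> u = 1"
  shows "A *v u = (u \<bullet> (A *v u)) *\<^sub>R u"
proof -
  define m where "m = u \<bullet> (A *v u)"
  define w where "w = A *v u - m *\<^sub>R u"
  \<comment> \<open>By minimality, s \<mapsto> (u + s w) \<bullet> A (u + s w) - m |u + s w|^2 is a nonnegative
    quadratic, and its linear coefficient is 2 |w|^2.\<close>
  have ww: "w \<bullet> w = w \<bullet> (A *v u) - m * (w \<bullet> u)"
    unfolding w_def by (simp add: inner_diff_right)
  have "0 \<le> 2 * s * (w \<bullet> w) + s\<^sup>2 * (w \<bullet> (A *v w) - m * (w \<bullet> w))" for s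
  proof -
    have "u \<bullet> (A *v w) = w \<bullet> (A *v u)"
      using symmetric_matrix_inner[OF sym, of w u] by (simp add: inner_commute)
    then have q: "(u + s *\<^sub>R w) \<bullet> (A *v (u + s *\<^sub>R w))
        = m + 2 * s * (w \<bullet> (A *v u)) + s\<^sup>2 * (w \<bullet> (A *v w))"
      unfolding m_def by (simp add: power2_eq_square algebra_simps)
    have n: "(u + s *\<^sub>R w) \<bullet> (u + s *\<^sub>R w) = 1 + 2 * s * (w \<bullet> u) + s\<^sup>2 * (w \<bullet> w)"
      using unit by (simp add: inner_commute power2_eq_square algebra_simps)
    have "m * (1 + 2 * s * (w \<bullet> u) + s\<^sup>2 * (w \<bullet> w)) \<le> m + 2 * s * (w \<bullet> (A *v u)) + s\<^sup>2 * (w \<bullet> (A *v w))"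
      using min[of "u + s *\<^sub>R w"] unfolding q n m_def .
    then show ?thesis
      unfolding ww by (simp add: algebra_simps)
  qed
  then have "w \<bullet> w = 0" by (rule linear_coeff_eq_0_if_quadratic_nonneg)
  then have "w = 0" by simp
  then show ?thesis unfolding w_def m_def by simp
qed

lemma symmetric_matrix_min_eigenvalue:
  fixes A :: "real^'n^'n"
  assumes sym: "transpose A = A"
  obtains m where "m \<in> eigenvalues_real A" and "\<And>v. m * (v \<bullet> v) \<le> v \<bullet> (A *v v)"
proof -
  let ?q = "\<lambda>v. v \<bullet> (A *v v)"
  have nonempty: "sphere (0::real^'n) 1 \<noteq> {}"
    using nonempty_Basis by auto
  have cont: "continuous_on (sphere 0 1) ?q"
    by (intro continuous_on_inner continuous_on_id linear_continuous_on matrix_vector_mul_bounded_linear)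
  obtain u where u: "u \<in> sphere 0 1" and umin: "\<And>y. y \<in> sphere 0 1 \<Longrightarrow> ?q u \<le> ?q y"
    using continuous_attains_inf[OF compact_sphere nonempty cont] by auto
  have unit: "u \<bullet> u = 1" using u by (simp add: norm_eq_1)
  have min: "?q u * (v \<bullet> v) \<le> ?q v" for v
  proof (cases "v = 0")
    case False
    have "?q u \<le> ?q ((1 / norm v) *\<^sub>R v)"
      using False by (intro umin) simp
    also have "\<dots> = ?q v / (v \<bullet> v)"
      by (simp add: matrix_vector_mult_scaleR power2_eq_square power2_norm_eq_inner[symmetric])
    finally show ?thesis
      using False by (simp add: pos_le_divide_eq)
  qed simp
  have "u \<noteq> 0" using unit by auto
  then have "?q u \<in> eigenvalues_real A"
    unfolding eigenvalues_real_def using Rayleigh_minimizer_eigenvector[OF sym min unit] by blast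
  with min show ?thesis using that by blast
qed

lemma lambda_min_ge_iff:
  fixes A :: "real^'n^'n"
  assumes sym: "transpose A = A"
  shows "r \<le> lambda_min A \<longleftrightarrow> (\<forall>v. r * (v \<bullet> v) \<le> v \<bullet> (A *v v))"
proof -
  obtain m where m: "m \<in> eigenvalues_real A" and min: "\<And>v. m * (v \<bullet> v) \<le> v \<bullet> (A *v v)"
    using symmetric_matrix_min_eigenvalue[OF sym] by blast
  have eigen: "\<exists>v. v \<bullet> v > 0 \<and> v \<bullet> (A *v v) = l * (v \<bullet> v)" if "l \<in> eigenvalues_real A" for l
    using that unfolding eigenvalues_real_def by auto
  have "m \<le> l" if "l \<in> eigenvalues_real A" for l
    using eigen[OF that] min by (metis mult_le_cancel_right_pos)
  then have "lambda_min A = m"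
    unfolding lambda_min_def using Min_eqI[OF finite_eigenvalues_real[OF sym]] m by blast
  moreover have "r \<le> m" if "\<forall>v. r * (v \<bullet> v) \<le> v \<bullet> (A *v v)"
    using eigen[OF m] that by (metis mult_le_cancel_right_pos)
  moreover have "r * (v \<bullet> v) \<le> v \<bullet> (A *v v)" if "r \<le> m" for v
    using that min[of v] by (meson inner_ge_zero mult_right_mono order_trans)
  ultimately show ?thesis by blast
qed

lemma closed_quadratic_form_ge:
  "closed {X::real^'n^'n. \<forall>v. r * (v \<bullet> v) \<le> v \<bullet> (X *v v)}"
proof -
  have closed_v: "closed {X::real^'n^'n. r * (v \<bullet> v) \<le> v \<bullet> (X *v v)}" for v :: "real^'n"
  proof -
    have entrywise: "(\<lambda>X::real^'n^'n. v \<bullet> (X *v v))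
        = (\<lambda>X. \<Sum>i\<in>UNIV. \<Sum>j\<in>UNIV. v $ i * (X $ i $ j * v $ j))"
      by (simp add: inner_vec_def matrix_vector_mult_def sum_distrib_left)
    have "continuous_on UNIV (\<lambda>X::real^'n^'n. v \<bullet> (X *v v))"
      unfolding entrywise by (intro continuous_intros)
    then show ?thesis
      by (rule closed_Collect_le[OF continuous_on_const])
  qed
  then show ?thesis
    unfolding Collect_all_eq by (intro closed_INT ballI closed_v)
qed

lemma norm_matrix_sq: "(norm (A::real^'n^'m))\<^sup>2 = (\<Sum>i\<in>UNIV. \<Sum>j\<in>UNIV. (A $ i $ j)\<^sup>2)"
  unfolding power2_norm_eq_inner by (simp add: inner_vec_def power2_eq_square)

lemma frob_norm_eq_norm: "frob_norm A = norm A"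
  unfolding frob_norm_def norm_matrix_sq[symmetric] by simp

lemma abs_matrix_entry_le_norm: "\<bar>(A::real^'n^'m) $ i $ j\<bar> \<le> norm A"
  using component_le_norm_cart[of "A $ i" j] Finite_Cartesian_Product.norm_nth_le[of A i] by linarith

lemma inner_Basis_matrix:
  assumes "(e::real^'n^'m) \<in> Basis"
  obtains i j where "\<And>A::real^'n^'m. A \<bullet> e = A $ i $ j"
proof -
  obtain i u where e: "e = axis i u" and u: "u \<in> (Basis :: (real^'n) set)"
    using assms unfolding Basis_vec_def by blast
  obtain j where "u = axis j 1"
    using u unfolding Basis_vec_def by auto
  with e show thesis
    using that by (simp add: inner_axis)
qed

lemma abs_quadratic_form_le_norm:
  fixes S :: "real^'n^'n"
  shows "\<bar>v \<bullet> (S *v v)\<bar> \<le> norm S * (v \<bullet> v)"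
proof -
  define V where "V = (\<chi> i j. v $ i * v $ j :: real^'n^'n)"
  have "v \<bullet> (S *v v) = S \<bullet> V"
    unfolding V_def by (simp add: inner_vec_def matrix_vector_mult_def sum_distrib_left algebra_simps)
  moreover have "(norm V)\<^sup>2 = (v \<bullet> v)\<^sup>2"
    unfolding norm_matrix_sq V_def
    by (simp add: inner_vec_def power2_eq_square sum_product algebra_simps)
  then have "norm V = v \<bullet> v"
    by simp
  ultimately show ?thesis using Cauchy_Schwarz_ineq2[of S V] by simp
qed

lemma quadratic_form_sum:
  fixes X :: "'i \<Rightarrow> real^'n^'n"
  shows "v \<bullet> ((\<Sum>\<tau>\<in>I. X \<tau>) *v v) = (\<Sum>\<tau>\<in>I. v \<bullet> (X \<tau> *v v))"
proof (induction I rule: infinite_finite_induct)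
  case empty
  then show ?case by (simp add: matrix_vector_mult_def inner_vec_def)
qed (simp_all add: matrix_vector_mult_add_rdistrib inner_add_right)

lemma lambda_min_sum_add_ge:
  fixes P C :: "'i \<Rightarrow> real^'n^'n"
  assumes P_sym: "\<And>\<tau>. \<tau> \<in> I \<Longrightarrow> transpose (P \<tau>) = P \<tau>"
    and C_sym: "\<And>\<tau>. \<tau> \<in> I \<Longrightarrow> transpose (C \<tau>) = C \<tau>"
    and C_min: "\<And>\<tau>. \<tau> \<in> I \<Longrightarrow> r \<le> lambda_min (C \<tau>)"
    and deviation: "norm (\<Sum>\<tau>\<in>I. P \<tau> - C \<tau>) \<le> lam"
  shows "r * card I \<le> lambda_min ((\<Sum>\<tau>\<in>I. P \<tau>) + lam *\<^sub>R mat 1)"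
proof -
  have "transpose ((\<Sum>\<tau>\<in>I. P \<tau>) + lam *\<^sub>R mat 1) = (\<Sum>\<tau>\<in>I. P \<tau>) + lam *\<^sub>R mat 1"
    using P_sym unfolding symmetric_matrix_iff by (auto simp: mat_def intro!: sum.cong)
  moreover have "r * card I * (v \<bullet> v) \<le> v \<bullet> (((\<Sum>\<tau>\<in>I. P \<tau>) + lam *\<^sub>R mat 1) *v v)" for v
  proof -
    let ?S = "\<Sum>\<tau>\<in>I. P \<tau> - C \<tau>"
    have "(\<Sum>\<tau>\<in>I. P \<tau>) = (\<Sum>\<tau>\<in>I. C \<tau>) + ?S"
      by (simp add: sum_subtractf)
    then have "v \<bullet> (((\<Sum>\<tau>\<in>I. P \<tau>) + lam *\<^sub>R mat 1) *v v)
        = (\<Sum>\<tau>\<in>I. v \<bullet> (C \<tau> *v v)) + v \<bullet> (?S *v v) + lam * (v \<bullet> v)"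
      by (simp add: matrix_vector_mult_add_rdistrib inner_add_right quadratic_form_sum
          scaleR_matrix_vector_assoc[symmetric])
    moreover have "(\<Sum>\<tau>\<in>I. r * (v \<bullet> v)) \<le> (\<Sum>\<tau>\<in>I. v \<bullet> (C \<tau> *v v))"
      using C_min C_sym lambda_min_ge_iff by (intro sum_mono) blast
    moreover have "- (lam * (v \<bullet> v)) \<le> v \<bullet> (?S *v v)"
      using abs_quadratic_form_le_norm[of v ?S] mult_right_mono[OF deviation inner_ge_zero[of v]]
      by linarith
    ultimately show ?thesis by (simp add: mult_ac)
  qed
  ultimately show ?thesis by (simp add: lambda_min_ge_iff)
qed

lemma borel_measurable_vecI:
  fixes f :: "'a \<Rightarrow> 'b::euclidean_space^'n"
  assumes "\<And>i. (\<lambda>x. f x $ i) \<in> borel_measurable N"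
  shows "f \<in> borel_measurable N"
proof (subst borel_measurable_euclidean_space, intro ballI)
  fix b :: "'b^'n" assume "b \<in> Basis"
  then obtain i u where b: "b = axis i u" "u \<in> Basis" unfolding Basis_vec_def by auto
  have "(\<lambda>x. (f x $ i) \<bullet> u) \<in> borel_measurable N" using assms[of i] by measurable
  then show "(\<lambda>x. f x \<bullet> b) \<in> borel_measurable N" unfolding b by (simp add: inner_axis)
qed

lemma borel_measurable_matrixI:
  fixes f :: "'a \<Rightarrow> real^'n^'m"
  assumes "\<And>i j. (\<lambda>x. f x $ i $ j) \<in> borel_measurable N"
  shows "f \<in> borel_measurable N"
  by (intro borel_measurable_vecI assms)

lemma sets_lambda_min_ge:
  fixes A :: "'a \<Rightarrow> real^'n^'n"
  assumes "\<And>i j. (\<lambda>\<omega>. A \<omega> $ i $ j) \<in> borel_measurable M"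
    and "\<And>\<omega>. \<omega> \<in> space M \<Longrightarrow> transpose (A \<omega>) = A \<omega>"
  shows "{\<omega> \<in> space M. r \<le> lambda_min (A \<omega>)} \<in> sets M"
proof -
  have "{\<omega> \<in> space M. r \<le> lambda_min (A \<omega>)}
      = A -` {X. \<forall>v. r * (v \<bullet> v) \<le> v \<bullet> (X *v v)} \<inter> space M"
    using assms(2) by (auto simp: lambda_min_ge_iff)
  also have "\<dots> \<in> sets M"
    using borel_measurable_matrixI[OF assms(1)] borel_closed[OF closed_quadratic_form_ge]
    by (rule measurable_sets)
  finally show ?thesis .
qed

section \<open>An Azuma inequality in Euclidean space\<close>

lemma exp_le_one_plus_plus_square:
  fixes y :: real
  assumes "y \<le> 1"
  shows "exp y \<le> 1 + y + y\<^sup>2"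
proof (cases "y \<ge> 0")
  case False
  obtain z where "exp y = 1 + y + y\<^sup>2 / 2 + exp z / 6 * y ^ 3"
    using Maclaurin_exp_le[of y 3] by (auto simp: numeral_3_eq_3 power2_eq_square)
  moreover have "exp z / 6 * y ^ 3 \<le> 0"
    using False by (simp add: mult_nonneg_nonpos)
  ultimately show ?thesis
    using zero_le_power2[of y] by linarith
qed (use assms exp_bound in auto)

lemma exp_sq_norm_add_le:
  fixes s d :: "'a::real_inner" and \<alpha> b :: real
  assumes "0 \<le> \<alpha>" and d: "norm d \<le> b" and small: "2 * \<alpha> * norm s * b \<le> 1"
  shows "exp (\<alpha> * (norm (s + d))\<^sup>2)
    \<le> exp (\<alpha> * b\<^sup>2) * (exp ((\<alpha> + 4 * \<alpha>\<^sup>2 * b\<^sup>2) * (norm s)\<^sup>2) + exp (\<alpha> * (norm s)\<^sup>2) * (2 * \<alpha> * (s \<bullet> d)))"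
proof -
  define Y where "Y = 2 * \<alpha> * (s \<bullet> d)"
  define W where "W = exp (\<alpha> * (norm s)\<^sup>2)"
  have "\<bar>s \<bullet> d\<bar> \<le> norm s * b"
    using Cauchy_Schwarz_ineq2[of s d] mult_left_mono[OF d norm_ge_zero[of s]] by linarith
  then have "\<bar>Y\<bar> \<le> 2 * \<alpha> * norm s * b"
    unfolding Y_def using \<open>0 \<le> \<alpha>\<close> by (simp add: abs_mult mult_left_mono mult.assoc)
  then have Y1: "Y \<le> 1" and Y2: "Y\<^sup>2 \<le> 4 * \<alpha>\<^sup>2 * b\<^sup>2 * (norm s)\<^sup>2"
    using small abs_le_square_iff[of Y "2 * \<alpha> * norm s * b"]
    by (auto simp: power_mult_distrib ac_simps)
  have "exp Y \<le> Y + exp (4 * \<alpha>\<^sup>2 * b\<^sup>2 * (norm s)\<^sup>2)"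
    using exp_le_one_plus_plus_square[OF Y1] Y2 exp_ge_add_one_self[of "4 * \<alpha>\<^sup>2 * b\<^sup>2 * (norm s)\<^sup>2"]
    by linarith
  then have "W * exp Y \<le> W * (Y + exp (4 * \<alpha>\<^sup>2 * b\<^sup>2 * (norm s)\<^sup>2))"
    unfolding W_def by simp
  also have "\<dots> = W * Y + exp ((\<alpha> + 4 * \<alpha>\<^sup>2 * b\<^sup>2) * (norm s)\<^sup>2)"
    unfolding W_def by (simp add: exp_add[symmetric] algebra_simps)
  finally have "W * exp Y \<le> W * Y + exp ((\<alpha> + 4 * \<alpha>\<^sup>2 * b\<^sup>2) * (norm s)\<^sup>2)" .
  moreover have "exp (\<alpha> * (norm d)\<^sup>2) \<le> exp (\<alpha> * b\<^sup>2)"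
    using d \<open>0 \<le> \<alpha>\<close> by (simp add: mult_left_mono power_mono)
  moreover have "exp (\<alpha> * (norm (s + d))\<^sup>2) = W * exp Y * exp (\<alpha> * (norm d)\<^sup>2)"
    unfolding W_def Y_def power2_norm_eq_inner
    by (simp add: exp_add[symmetric] inner_commute algebra_simps)
  ultimately show ?thesis
    unfolding W_def Y_def
    by (simp add: mult_mono mult.commute)
qed

lemma azuma_exponent_step:
  fixes x N :: real
  assumes "0 \<le> x" and small: "8 * x * (N + 1) \<le> 1"
  shows "8 * (x + 4 * x\<^sup>2) * N \<le> 1" and "x + 2 * (x + 4 * x\<^sup>2) * N \<le> 2 * x * (N + 1)"
proof -
  have xN: "8 * (x * N) \<le> 1 - 8 * x"
    using small by (simp add: algebra_simps)
  have "x * (8 * (x * N)) \<le> x * (1 - 8 * x)"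
    using xN \<open>0 \<le> x\<close> by (rule mult_left_mono)
  then have x2N: "8 * (x\<^sup>2 * N) \<le> x - 8 * x\<^sup>2"
    by (simp add: algebra_simps power2_eq_square)
  have "0 \<le> x\<^sup>2" by simp
  have "8 * (x + 4 * x\<^sup>2) * N = 8 * (x * N) + 4 * (8 * (x\<^sup>2 * N))"
    by (simp add: algebra_simps)
  then show "8 * (x + 4 * x\<^sup>2) * N \<le> 1"
    using xN x2N \<open>0 \<le> x\<close> \<open>0 \<le> x\<^sup>2\<close> by linarith
  have "8 * (x\<^sup>2 * N) \<le> x"
    using x2N \<open>0 \<le> x\<^sup>2\<close> by linarith
  then show "x + 2 * (x + 4 * x\<^sup>2) * N \<le> 2 * x * (N + 1)"
    by (simp add: algebra_simps)
qed

locale filtered_prob_space = prob_space M for M :: "'a measure" +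
  fixes F :: "nat \<Rightarrow> 'a measure"
  assumes filtration: "filtration (space M) F"
    and subalgebra_F: "\<And>n. subalgebra M (F n)"

begin

lemma sigma_finite_subalgebra_F: "sigma_finite_subalgebra M (F n)"
  by (rule finite_measure_subalgebra_is_sigma_finite)
     (simp add: finite_measure_subalgebra_def finite_measure_subalgebra_axioms_def
       subalgebra_F)

lemma measurable_F_mono: "f \<in> measurable (F m) N \<Longrightarrow> m \<le> n \<Longrightarrow> f \<in> measurable (F n) N"
  by (rule measurable_from_subalg)
     (use filtration.space_F[OF filtration] filtration.sets_F_mono[OF filtration] in \<open>auto simp: subalgebra_def\<close>)

lemma measurable_F_imp_M: "f \<in> measurable (F n) N \<Longrightarrow> f \<in> measurable M N"
  by (rule measurable_from_subalg[OF subalgebra_F])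

text \<open>The conditional mean is required to vanish coordinatewise, because conditional
  expectations are only available for real-valued functions.\<close>

definition bounded_martingale_differences :: "nat \<Rightarrow> real \<Rightarrow> (nat \<Rightarrow> 'a \<Rightarrow> 'v::euclidean_space) \<Rightarrow> bool"
  where "bounded_martingale_differences n b D \<longleftrightarrow> (\<forall>\<tau>\<in>{1..n}.
    D \<tau> \<in> borel_measurable (F \<tau>) \<and> (AE \<omega> in M. norm (D \<tau> \<omega>) \<le> b) \<and>
    (\<forall>e\<in>Basis. AE \<omega> in M. real_cond_exp M (F (\<tau> - 1)) (\<lambda>\<omega>. D \<tau> \<omega> \<bullet> e) \<omega> = 0))"

lemma bounded_martingale_differences_Suc:
  "bounded_martingale_differences (Suc n) b D \<Longrightarrow> bounded_martingale_differences n b D"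
  unfolding bounded_martingale_differences_def by auto

lemma borel_measurable_martingale_sum:
  assumes "bounded_martingale_differences n b D"
  shows "(\<lambda>\<omega>. \<Sum>\<tau>\<in>{1..n}. D \<tau> \<omega>) \<in> borel_measurable (F n)"
  using assms unfolding bounded_martingale_differences_def
  by (intro borel_measurable_sum) (auto intro: measurable_F_mono)

lemma norm_martingale_sum_le:
  assumes "bounded_martingale_differences n b D"
  shows "AE \<omega> in M. norm (\<Sum>\<tau>\<in>{1..n}. D \<tau> \<omega>) \<le> n * b"
proof -
  have "AE \<omega> in M. \<forall>\<tau>\<in>{1..n}. norm (D \<tau> \<omega>) \<le> b"
    using assms unfolding bounded_martingale_differences_def by (intro AE_finite_allI) auto
  then show ?thesis
  proof eventually_elim
    case (elim \<omega>)
    have "norm (\<Sum>\<tau>\<in>{1..n}. D \<tau> \<omega>) \<le> (\<Sum>\<tau>\<in>{1..n}. norm (D \<tau> \<omega>))"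
      by (rule norm_sum)
    also have "\<dots> \<le> (\<Sum>\<tau>\<in>{1..n}. b)"
      using elim by (intro sum_mono) auto
    finally show ?case by simp
  qed
qed

lemma integrable_exp_sq_norm_martingale_sum:
  assumes "bounded_martingale_differences n b D" and "0 \<le> \<alpha>"
  shows "integrable M (\<lambda>\<omega>. exp (\<alpha> * (norm (\<Sum>\<tau>\<in>{1..n}. D \<tau> \<omega>))\<^sup>2))"
proof (rule integrable_const_bound)
  show "AE \<omega> in M. norm (exp (\<alpha> * (norm (\<Sum>\<tau>\<in>{1..n}. D \<tau> \<omega>))\<^sup>2)) \<le> exp (\<alpha> * (n * b)\<^sup>2)"
    using norm_martingale_sum_le[OF assms(1)]
    by eventually_elim (use \<open>0 \<le> \<alpha>\<close> in \<open>auto intro!: mult_left_mono power_mono\<close>)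
  show "(\<lambda>\<omega>. exp (\<alpha> * (norm (\<Sum>\<tau>\<in>{1..n}. D \<tau> \<omega>))\<^sup>2)) \<in> borel_measurable M"
    using measurable_F_imp_M[OF borel_measurable_martingale_sum[OF assms(1)]] by measurable
qed

lemma integral_inner_martingale_difference:
  fixes g :: "'a \<Rightarrow> 'v::euclidean_space"
  assumes D: "bounded_martingale_differences n b D" and "\<tau> \<in> {1..n}"
    and g: "g \<in> borel_measurable (F (\<tau> - 1))" and g_bound: "AE \<omega> in M. norm (g \<omega>) \<le> K"
  shows "integrable M (\<lambda>\<omega>. g \<omega> \<bullet> D \<tau> \<omega>)" and "(\<integral>\<omega>. g \<omega> \<bullet> D \<tau> \<omega> \<partial>M) = 0"
proof -
  interpret sigma_finite_subalgebra M "F (\<tau> - 1)" by (rule sigma_finite_subalgebra_F)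
  have D_meas [measurable]: "D \<tau> \<in> borel_measurable M"
    and D_bound: "AE \<omega> in M. norm (D \<tau> \<omega>) \<le> b"
    and mean_0: "\<And>e. e \<in> Basis \<Longrightarrow> AE \<omega> in M. real_cond_exp M (F (\<tau> - 1)) (\<lambda>\<omega>. D \<tau> \<omega> \<bullet> e) \<omega> = 0"
    using D \<open>\<tau> \<in> {1..n}\<close> unfolding bounded_martingale_differences_def
    by (auto intro: measurable_F_imp_M)
  have [measurable]: "g \<in> borel_measurable M" using g by (rule measurable_F_imp_M)
  have int: "integrable M (\<lambda>\<omega>. (g \<omega> \<bullet> e) * (D \<tau> \<omega> \<bullet> e))" if "e \<in> Basis" for e
  proof (rule integrable_const_bound[where B = "K * b"])
    show "AE \<omega> in M. norm ((g \<omega> \<bullet> e) * (D \<tau> \<omega> \<bullet> e)) \<le> K * b"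
      using g_bound D_bound
    proof eventually_elim
      case (elim \<omega>)
      have "\<bar>g \<omega> \<bullet> e\<bar> \<le> K" "\<bar>D \<tau> \<omega> \<bullet> e\<bar> \<le> b"
        using elim Basis_le_norm[OF that] by (auto intro: order_trans)
      then show ?case by (simp add: abs_mult mult_mono')
    qed
  qed measurable
  have "(\<integral>\<omega>. (g \<omega> \<bullet> e) * (D \<tau> \<omega> \<bullet> e) \<partial>M) = 0" if "e \<in> Basis" for e
  proof -
    have "(\<integral>\<omega>. (g \<omega> \<bullet> e) * (D \<tau> \<omega> \<bullet> e) \<partial>M)
        = (\<integral>\<omega>. (g \<omega> \<bullet> e) * real_cond_exp M (F (\<tau> - 1)) (\<lambda>\<omega>. D \<tau> \<omega> \<bullet> e) \<omega> \<partial>M)"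
      using int[OF that] g by (intro real_cond_exp_intg(2)[symmetric]) auto
    also have "\<dots> = (\<integral>\<omega>. 0 \<partial>M)"
      using mean_0[OF that] by (intro integral_cong_AE) auto
    also have "\<dots> = 0"
      by simp
    finally show ?thesis .
  qed
  moreover have inner_sum: "g \<omega> \<bullet> D \<tau> \<omega> = (\<Sum>e\<in>Basis. (g \<omega> \<bullet> e) * (D \<tau> \<omega> \<bullet> e))" for \<omega>
    by (rule euclidean_inner)
  ultimately show "integrable M (\<lambda>\<omega>. g \<omega> \<bullet> D \<tau> \<omega>)" "(\<integral>\<omega>. g \<omega> \<bullet> D \<tau> \<omega> \<partial>M) = 0"
    using int by (simp_all add: inner_sum)
qed

lemma integral_martingale_cross_term:
  assumes D: "bounded_martingale_differences (Suc n) b D" and "0 \<le> \<alpha>"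
  defines "g \<omega> \<equiv> (2 * \<alpha> * exp (\<alpha> * (norm (\<Sum>\<tau>\<in>{1..n}. D \<tau> \<omega>))\<^sup>2)) *\<^sub>R (\<Sum>\<tau>\<in>{1..n}. D \<tau> \<omega>)"
  shows "integrable M (\<lambda>\<omega>. g \<omega> \<bullet> D (Suc n) \<omega>)" and "(\<integral>\<omega>. g \<omega> \<bullet> D (Suc n) \<omega> \<partial>M) = 0"
proof -
  have Dn: "bounded_martingale_differences n b D"
    using D by (rule bounded_martingale_differences_Suc)
  have "g \<in> borel_measurable (F (Suc n - 1))"
    using borel_measurable_martingale_sum[OF Dn] unfolding g_def by simp
  moreover have "AE \<omega> in M. norm (g \<omega>) \<le> 2 * \<alpha> * exp (\<alpha> * (n * b)\<^sup>2) * (n * b)"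
    using norm_martingale_sum_le[OF Dn]
  proof eventually_elim
    case (elim \<omega>)
    have "exp (\<alpha> * (norm (\<Sum>\<tau>\<in>{1..n}. D \<tau> \<omega>))\<^sup>2) \<le> exp (\<alpha> * (n * b)\<^sup>2)"
      using elim \<open>0 \<le> \<alpha>\<close> by (auto intro!: mult_left_mono power_mono)
    then show ?case
      unfolding g_def using elim \<open>0 \<le> \<alpha>\<close> by (auto intro!: mult_mono)
  qed
  ultimately show "integrable M (\<lambda>\<omega>. g \<omega> \<bullet> D (Suc n) \<omega>)" "(\<integral>\<omega>. g \<omega> \<bullet> D (Suc n) \<omega> \<partial>M) = 0"
    using integral_inner_martingale_difference[OF D, of "Suc n"] by auto
qed

lemma exp_sq_norm_martingale_sum_Suc_le:
  assumes D: "bounded_martingale_differences (Suc n) b D" and "0 \<le> \<alpha>"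
    and small: "2 * \<alpha> * b\<^sup>2 * n \<le> 1"
  shows "(\<integral>\<omega>. exp (\<alpha> * (norm (\<Sum>\<tau>\<in>{1..Suc n}. D \<tau> \<omega>))\<^sup>2) \<partial>M)
    \<le> exp (\<alpha> * b\<^sup>2) * (\<integral>\<omega>. exp ((\<alpha> + 4 * \<alpha>\<^sup>2 * b\<^sup>2) * (norm (\<Sum>\<tau>\<in>{1..n}. D \<tau> \<omega>))\<^sup>2) \<partial>M)"
proof -
  define S where "S \<omega> = (\<Sum>\<tau>\<in>{1..n}. D \<tau> \<omega>)" for \<omega>
  define G where "G \<omega> = exp (\<alpha> * (norm (S \<omega>))\<^sup>2) * (2 * \<alpha> * (S \<omega> \<bullet> D (Suc n) \<omega>))" for \<omega>
  have Dn: "bounded_martingale_differences n b D"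
    using D by (rule bounded_martingale_differences_Suc)
  have int_G: "integrable M G" and mean_G: "(\<integral>\<omega>. G \<omega> \<partial>M) = 0"
    using integral_martingale_cross_term[OF D \<open>0 \<le> \<alpha>\<close>] unfolding G_def S_def by (simp_all add: ac_simps)
  have D_bound: "AE \<omega> in M. norm (D (Suc n) \<omega>) \<le> b"
    using D unfolding bounded_martingale_differences_def by auto
  then have "AE \<omega> in M. 0 \<le> b"
    by eventually_elim (rule order_trans[OF norm_ge_zero])
  then have "0 \<le> b" by simp
  have "AE \<omega> in M. exp (\<alpha> * (norm (S \<omega> + D (Suc n) \<omega>))\<^sup>2)
      \<le> exp (\<alpha> * b\<^sup>2) * (exp ((\<alpha> + 4 * \<alpha>\<^sup>2 * b\<^sup>2) * (norm (S \<omega>))\<^sup>2) + G \<omega>)"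
    using norm_martingale_sum_le[OF Dn] D_bound
  proof eventually_elim
    case (elim \<omega>)
    have "2 * \<alpha> * norm (S \<omega>) * b \<le> 2 * \<alpha> * (n * b) * b"
      using elim \<open>0 \<le> \<alpha>\<close> \<open>0 \<le> b\<close> unfolding S_def by (intro mult_right_mono mult_left_mono) auto
    also have "\<dots> \<le> 1"
      using small by (simp add: power2_eq_square algebra_simps)
    finally show ?case
      using exp_sq_norm_add_le[OF \<open>0 \<le> \<alpha>\<close> elim(2)] unfolding G_def by simp
  qed
  then have "(\<integral>\<omega>. exp (\<alpha> * (norm (S \<omega> + D (Suc n) \<omega>))\<^sup>2) \<partial>M)
      \<le> (\<integral>\<omega>. exp (\<alpha> * b\<^sup>2) * (exp ((\<alpha> + 4 * \<alpha>\<^sup>2 * b\<^sup>2) * (norm (S \<omega>))\<^sup>2) + G \<omega>) \<partial>M)"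
    using integrable_exp_sq_norm_martingale_sum[OF D \<open>0 \<le> \<alpha>\<close>]
      integrable_exp_sq_norm_martingale_sum[OF Dn, of "\<alpha> + 4 * \<alpha>\<^sup>2 * b\<^sup>2"] \<open>0 \<le> \<alpha>\<close> int_G
    by (intro integral_mono_AE) (auto simp: S_def atLeastAtMostSuc_conv add.commute)
  also have "\<dots> = exp (\<alpha> * b\<^sup>2) * (\<integral>\<omega>. exp ((\<alpha> + 4 * \<alpha>\<^sup>2 * b\<^sup>2) * (norm (S \<omega>))\<^sup>2) \<partial>M)"
    using integrable_exp_sq_norm_martingale_sum[OF Dn, of "\<alpha> + 4 * \<alpha>\<^sup>2 * b\<^sup>2"] \<open>0 \<le> \<alpha>\<close> int_G mean_G
    by (simp add: S_def)
  finally show ?thesis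
    by (simp add: S_def atLeastAtMostSuc_conv add.commute)
qed

theorem exp_sq_norm_martingale_sum_le:
  assumes "bounded_martingale_differences n b D" and "0 \<le> \<alpha>" and "8 * \<alpha> * b\<^sup>2 * n \<le> 1"
  shows "(\<integral>\<omega>. exp (\<alpha> * (norm (\<Sum>\<tau>\<in>{1..n}. D \<tau> \<omega>))\<^sup>2) \<partial>M) \<le> exp (2 * \<alpha> * b\<^sup>2 * n)"
  using assms
proof (induction n arbitrary: \<alpha>)
  case 0
  then show ?case by (simp add: prob_space)
next
  case (Suc n)
  define x where "x = \<alpha> * b\<^sup>2"
  define \<alpha>' where "\<alpha>' = \<alpha> + 4 * \<alpha>\<^sup>2 * b\<^sup>2"
  have "0 \<le> x" "0 \<le> \<alpha>'" unfolding x_def \<alpha>'_def using Suc.prems by simp_all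
  have x': "\<alpha>' * b\<^sup>2 = x + 4 * x\<^sup>2"
    unfolding \<alpha>'_def x_def by (simp add: algebra_simps power2_eq_square)
  have small: "8 * x * (real n + 1) \<le> 1"
    using Suc.prems(3) unfolding x_def by (simp add: algebra_simps)
  have "0 \<le> x * n" using \<open>0 \<le> x\<close> by simp
  then have "2 * \<alpha> * b\<^sup>2 * n \<le> 1"
    using small \<open>0 \<le> x\<close> unfolding x_def by (simp add: algebra_simps)
  then have "(\<integral>\<omega>. exp (\<alpha> * (norm (\<Sum>\<tau>\<in>{1..Suc n}. D \<tau> \<omega>))\<^sup>2) \<partial>M)
      \<le> exp x * (\<integral>\<omega>. exp (\<alpha>' * (norm (\<Sum>\<tau>\<in>{1..n}. D \<tau> \<omega>))\<^sup>2) \<partial>M)"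
    unfolding x_def \<alpha>'_def using Suc.prems by (intro exp_sq_norm_martingale_sum_Suc_le)
  also have "\<dots> \<le> exp x * exp (2 * (\<alpha>' * b\<^sup>2) * n)"
  proof -
    have "8 * (\<alpha>' * b\<^sup>2) * n \<le> 1"
      unfolding x' by (rule azuma_exponent_step(1)[OF \<open>0 \<le> x\<close> small])
    then show ?thesis
      using Suc.IH[OF bounded_martingale_differences_Suc[OF Suc.prems(1)] \<open>0 \<le> \<alpha>'\<close>]
      by (simp add: mult.assoc)
  qed
  also have "\<dots> \<le> exp (2 * x * (real n + 1))"
    unfolding x' using azuma_exponent_step(2)[OF \<open>0 \<le> x\<close> small]
    by (simp add: exp_add[symmetric])
  finally show ?case
    by (simp add: x_def algebra_simps)
qed

corollary prob_norm_martingale_sum_ge_le: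
  assumes "bounded_martingale_differences n b D" and "0 \<le> lam"
  shows "prob {\<omega> \<in> space M. lam \<le> norm (\<Sum>\<tau>\<in>{1..n}. D \<tau> \<omega>)} \<le> exp (1 / 4 - lam\<^sup>2 / (8 * b\<^sup>2 * n))"
proof -
  \<comment> \<open>If b = 0 or n = 0 then \<alpha> = 0 by division by zero, and the bound is trivial.\<close>
  define \<alpha> where "\<alpha> = 1 / (8 * b\<^sup>2 * n)"
  define E where "E \<omega> = exp (\<alpha> * (norm (\<Sum>\<tau>\<in>{1..n}. D \<tau> \<omega>))\<^sup>2)" for \<omega>
  have "0 \<le> \<alpha>" unfolding \<alpha>_def by simp
  have small: "8 * \<alpha> * b\<^sup>2 * n \<le> 1" and quarter: "2 * \<alpha> * b\<^sup>2 * n \<le> 1 / 4"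
    unfolding \<alpha>_def by (auto simp: field_simps)
  have "integrable M E"
    unfolding E_def by (rule integrable_exp_sq_norm_martingale_sum[OF assms(1) \<open>0 \<le> \<alpha>\<close>])
  then have [measurable]: "E \<in> borel_measurable M" by auto
  have "{\<omega> \<in> space M. lam \<le> norm (\<Sum>\<tau>\<in>{1..n}. D \<tau> \<omega>)} \<subseteq> {\<omega> \<in> space M. exp (\<alpha> * lam\<^sup>2) \<le> E \<omega>}"
    using \<open>0 \<le> lam\<close> \<open>0 \<le> \<alpha>\<close> by (auto simp: E_def intro!: mult_left_mono power_mono)
  then have "prob {\<omega> \<in> space M. lam \<le> norm (\<Sum>\<tau>\<in>{1..n}. D \<tau> \<omega>)} \<le> prob {\<omega> \<in> space M. exp (\<alpha> * lam\<^sup>2) \<le> E \<omega>}"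
    by (intro finite_measure_mono) measurable
  also have "\<dots> \<le> (\<integral>\<omega>. E \<omega> \<partial>M) / exp (\<alpha> * lam\<^sup>2)"
    by (rule integral_Markov_inequality_measure[OF \<open>integrable M E\<close> sets.top]) (auto simp: E_def)
  also have "\<dots> \<le> exp (1 / 4) / exp (\<alpha> * lam\<^sup>2)"
    using exp_sq_norm_martingale_sum_le[OF assms(1) \<open>0 \<le> \<alpha>\<close> small] quarter
    unfolding E_def by (intro divide_right_mono) (auto intro: order_trans)
  also have "\<dots> = exp (1 / 4 - lam\<^sup>2 / (8 * b\<^sup>2 * n))"
    unfolding \<alpha>_def by (simp add: exp_diff)
  finally show ?thesis .
qed

section \<open>Conditional expectations of bounded random matrices\<close>

lemma integrable_bounded_matrix_entry:
  fixes X :: "'a \<Rightarrow> real^'n^'m"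
  assumes "(\<lambda>\<omega>. X \<omega> $ i $ j) \<in> borel_measurable M"
    and "\<And>\<omega>. \<omega> \<in> space M \<Longrightarrow> norm (X \<omega>) \<le> c"
  shows "integrable M (\<lambda>\<omega>. X \<omega> $ i $ j)" and "integrable M (\<lambda>\<omega>. (X \<omega> $ i $ j)\<^sup>2)"
proof -
  have entry: "\<bar>X \<omega> $ i $ j\<bar> \<le> c" if "\<omega> \<in> space M" for \<omega>
    using abs_matrix_entry_le_norm[of "X \<omega>" i j] assms(2)[OF that] by linarith
  then have "(X \<omega> $ i $ j)\<^sup>2 \<le> c\<^sup>2" if "\<omega> \<in> space M" for \<omega>
    using power_mono[OF entry[OF that] abs_ge_zero, of 2] by simp
  then show "integrable M (\<lambda>\<omega>. (X \<omega> $ i $ j)\<^sup>2)"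
    using assms(1) by (intro integrable_const_bound[where B = "c\<^sup>2"] AE_I2) auto
  show "integrable M (\<lambda>\<omega>. X \<omega> $ i $ j)"
    using entry assms(1) by (intro integrable_const_bound[where B = c] AE_I2) auto
qed

lemma norm_mat_cond_exp_le:
  fixes X :: "'a \<Rightarrow> real^'n^'n"
  assumes meas: "\<And>i j. (\<lambda>\<omega>. X \<omega> $ i $ j) \<in> borel_measurable M"
    and bound: "\<And>\<omega>. \<omega> \<in> space M \<Longrightarrow> norm (X \<omega>) \<le> c"
  shows "AE \<omega> in M. norm (mat_cond_exp M (F k) X \<omega>) \<le> c"
proof -
  interpret sigma_finite_subalgebra M "F k" by (rule sigma_finite_subalgebra_F)
  let ?E = "real_cond_exp M (F k)"
  let ?X = "\<lambda>p \<omega>. X \<omega> $ fst p $ snd p"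
  note int = integrable_bounded_matrix_entry[OF meas bound]
  have sum_pairs: "(norm A)\<^sup>2 = (\<Sum>p\<in>UNIV. (A $ fst p $ snd p)\<^sup>2)" for A :: "real^'n^'n"
    unfolding norm_matrix_sq UNIV_Times_UNIV[symmetric] sum.cartesian_product by (simp add: case_prod_beta)
  obtain \<omega> where "\<omega> \<in> space M"
    using not_empty by blast
  then have "0 \<le> c"
    using bound norm_ge_zero order_trans by blast
  have "AE \<omega> in M. \<forall>p\<in>UNIV. (?E (?X p) \<omega>)\<^sup>2 \<le> ?E (\<lambda>\<omega>. (?X p \<omega>)\<^sup>2) \<omega>"
    by (intro AE_finite_allI ballI real_cond_exp_jensens_inequality(2)[where I = UNIV])
       (auto simp: int convex_power2)
  moreover have "AE \<omega> in M. ?E (\<lambda>\<omega>. \<Sum>p\<in>UNIV. (?X p \<omega>)\<^sup>2) \<omega> = (\<Sum>p\<in>UNIV. ?E (\<lambda>\<omega>. (?X p \<omega>)\<^sup>2) \<omega>)"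
    by (rule real_cond_exp_sum) (simp add: int)
  moreover have "AE \<omega> in M. ?E (\<lambda>\<omega>. \<Sum>p\<in>UNIV. (?X p \<omega>)\<^sup>2) \<omega> \<le> c\<^sup>2"
  proof (rule real_cond_exp_le_c)
    show "integrable M (\<lambda>\<omega>. \<Sum>p\<in>UNIV. (?X p \<omega>)\<^sup>2)"
      by (simp add: int)
    show "AE \<omega> in M. (\<Sum>p\<in>UNIV. (?X p \<omega>)\<^sup>2) \<le> c\<^sup>2"
      using bound \<open>0 \<le> c\<close> by (intro AE_I2) (simp add: sum_pairs[symmetric] power_mono)
  qed
  ultimately show ?thesis
  proof eventually_elim
    case (elim \<omega>)
    have "(norm (mat_cond_exp M (F k) X \<omega>))\<^sup>2 = (\<Sum>p\<in>UNIV. (?E (?X p) \<omega>)\<^sup>2)"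
      by (simp add: sum_pairs mat_cond_exp_def)
    also have "\<dots> \<le> (\<Sum>p\<in>UNIV. ?E (\<lambda>\<omega>. (?X p \<omega>)\<^sup>2) \<omega>)"
      using elim(1) by (intro sum_mono) auto
    also have "\<dots> \<le> c\<^sup>2"
      using elim(2,3) by simp
    finally show ?case
      using \<open>0 \<le> c\<close> by (simp add: power2_le_iff_abs_le)
  qed
qed

lemma mat_cond_exp_symmetric:
  fixes X :: "'a \<Rightarrow> real^'n^'n"
  assumes meas: "\<And>i j. (\<lambda>\<omega>. X \<omega> $ i $ j) \<in> borel_measurable M"
    and sym: "\<And>\<omega>. \<omega> \<in> space M \<Longrightarrow> transpose (X \<omega>) = X \<omega>"
  shows "AE \<omega> in M. transpose (mat_cond_exp M (F k) X \<omega>) = mat_cond_exp M (F k) X \<omega>"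
proof -
  interpret sigma_finite_subalgebra M "F k" by (rule sigma_finite_subalgebra_F)
  have "AE \<omega> in M. real_cond_exp M (F k) (\<lambda>\<omega>. X \<omega> $ i $ j) \<omega> = real_cond_exp M (F k) (\<lambda>\<omega>. X \<omega> $ j $ i) \<omega>"
    for i j
    using sym meas by (intro real_cond_exp_cong AE_I2) (auto simp: symmetric_matrix_iff)
  then have "AE \<omega> in M. \<forall>i\<in>UNIV. \<forall>j\<in>UNIV.
      real_cond_exp M (F k) (\<lambda>\<omega>. X \<omega> $ i $ j) \<omega> = real_cond_exp M (F k) (\<lambda>\<omega>. X \<omega> $ j $ i) \<omega>"
    by (intro AE_finite_allI) auto
  then show ?thesis
    by eventually_elim (simp add: symmetric_matrix_iff mat_cond_exp_def)
qed

lemma cond_exp_mat_cond_exp_residual: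
  fixes X :: "'a \<Rightarrow> real^'n^'n"
  assumes meas: "\<And>i j. (\<lambda>\<omega>. X \<omega> $ i $ j) \<in> borel_measurable M"
    and bound: "\<And>\<omega>. \<omega> \<in> space M \<Longrightarrow> norm (X \<omega>) \<le> c"
  shows "AE \<omega> in M. real_cond_exp M (F k) (\<lambda>\<omega>. (X \<omega> - mat_cond_exp M (F k) X \<omega>) $ i $ j) \<omega> = 0"
proof -
  interpret sigma_finite_subalgebra M "F k" by (rule sigma_finite_subalgebra_F)
  let ?E = "real_cond_exp M (F k)"
  have int: "integrable M (\<lambda>\<omega>. X \<omega> $ i $ j)"
    by (rule integrable_bounded_matrix_entry(1)[OF meas bound])
  have "AE \<omega> in M. ?E (\<lambda>\<omega>. X \<omega> $ i $ j - ?E (\<lambda>\<omega>. X \<omega> $ i $ j) \<omega>) \<omega>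
      = ?E (\<lambda>\<omega>. X \<omega> $ i $ j) \<omega> - ?E (?E (\<lambda>\<omega>. X \<omega> $ i $ j)) \<omega>"
    using int by (intro real_cond_exp_diff real_cond_exp_int(1))
  moreover have "AE \<omega> in M. ?E (?E (\<lambda>\<omega>. X \<omega> $ i $ j)) \<omega> = ?E (\<lambda>\<omega>. X \<omega> $ i $ j) \<omega>"
    using int by (intro real_cond_exp_F_meas real_cond_exp_int(1) borel_measurable_cond_exp)
  ultimately show ?thesis
    by eventually_elim (simp add: mat_cond_exp_def)
qed

lemma bounded_martingale_differences_cond_exp_residuals:
  fixes P :: "nat \<Rightarrow> 'a \<Rightarrow> real^'n^'n"
  assumes meas: "\<And>\<tau> i j. \<tau> \<in> {1..n} \<Longrightarrow> (\<lambda>\<omega>. P \<tau> \<omega> $ i $ j) \<in> borel_measurable (F \<tau>)"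
    and bound: "\<And>\<tau> \<omega>. \<tau> \<in> {1..n} \<Longrightarrow> \<omega> \<in> space M \<Longrightarrow> norm (P \<tau> \<omega>) \<le> c"
  shows "bounded_martingale_differences n (2 * c) (\<lambda>\<tau> \<omega>. P \<tau> \<omega> - mat_cond_exp M (F (\<tau> - 1)) (P \<tau>) \<omega>)"
  unfolding bounded_martingale_differences_def
proof (intro ballI conjI)
  fix \<tau> assume \<tau>: "\<tau> \<in> {1..n}"
  have bound_\<tau>: "\<And>\<omega>. \<omega> \<in> space M \<Longrightarrow> norm (P \<tau> \<omega>) \<le> c"
    using bound \<tau> by blast
  have meas_M: "(\<lambda>\<omega>. P \<tau> \<omega> $ i $ j) \<in> borel_measurable M" for i j
    using meas[OF \<tau>] by (rule measurable_F_imp_M)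
  have "(\<lambda>\<omega>. mat_cond_exp M (F (\<tau> - 1)) (P \<tau>) \<omega> $ i $ j) \<in> borel_measurable (F \<tau>)" for i j
    by (rule measurable_F_mono[of _ "\<tau> - 1"]) (auto simp: mat_cond_exp_def)
  then show "(\<lambda>\<omega>. P \<tau> \<omega> - mat_cond_exp M (F (\<tau> - 1)) (P \<tau>) \<omega>) \<in> borel_measurable (F \<tau>)"
    using meas[OF \<tau>] by (intro borel_measurable_matrixI) simp
  have "AE \<omega> in M. norm (mat_cond_exp M (F (\<tau> - 1)) (P \<tau>) \<omega>) \<le> c"
    by (rule norm_mat_cond_exp_le) (fact meas_M, fact bound_\<tau>)
  then show "AE \<omega> in M. norm (P \<tau> \<omega> - mat_cond_exp M (F (\<tau> - 1)) (P \<tau>) \<omega>) \<le> 2 * c"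
    using AE_space
  proof eventually_elim
    case (elim \<omega>)
    show ?case
      using elim bound_\<tau>[OF elim(2)] norm_triangle_ineq4[of "P \<tau> \<omega>" "mat_cond_exp M (F (\<tau> - 1)) (P \<tau>) \<omega>"]
      by linarith
  qed
  fix e :: "real^'n^'n" assume "e \<in> Basis"
  then obtain i j where "\<And>A::real^'n^'n. A \<bullet> e = A $ i $ j"
    by (rule inner_Basis_matrix) blast
  then show "AE \<omega> in M. real_cond_exp M (F (\<tau> - 1))
      (\<lambda>\<omega>. (P \<tau> \<omega> - mat_cond_exp M (F (\<tau> - 1)) (P \<tau>) \<omega>) \<bullet> e) \<omega> = 0"
    using cond_exp_mat_cond_exp_residual[of "P \<tau>" c "\<tau> - 1" i j] meas_M bound_\<tau> by simp
qed

lemma AE_lambda_min_sum_ge: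
  fixes P :: "nat \<Rightarrow> 'a \<Rightarrow> real^'n^'n"
  assumes "finite I"
    and meas: "\<And>\<tau> i j. \<tau> \<in> I \<Longrightarrow> (\<lambda>\<omega>. P \<tau> \<omega> $ i $ j) \<in> borel_measurable M"
    and sym: "\<And>\<tau> \<omega>. \<tau> \<in> I \<Longrightarrow> \<omega> \<in> space M \<Longrightarrow> transpose (P \<tau> \<omega>) = P \<tau> \<omega>"
    and cond_min: "\<And>\<tau>. \<tau> \<in> I \<Longrightarrow> AE \<omega> in M. r \<le> lambda_min (mat_cond_exp M (F (\<tau> - 1)) (P \<tau>) \<omega>)"
  shows "AE \<omega> in M. norm (\<Sum>\<tau>\<in>I. P \<tau> \<omega> - mat_cond_exp M (F (\<tau> - 1)) (P \<tau>) \<omega>) \<le> lam \<longrightarrow>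
    r * card I \<le> lambda_min ((\<Sum>\<tau>\<in>I. P \<tau> \<omega>) + lam *\<^sub>R mat 1)"
proof -
  have "AE \<omega> in M. \<forall>\<tau>\<in>I. transpose (mat_cond_exp M (F (\<tau> - 1)) (P \<tau>) \<omega>) = mat_cond_exp M (F (\<tau> - 1)) (P \<tau>) \<omega>
      \<and> r \<le> lambda_min (mat_cond_exp M (F (\<tau> - 1)) (P \<tau>) \<omega>)"
    using \<open>finite I\<close> meas sym cond_min by (intro AE_finite_allI AE_conjI mat_cond_exp_symmetric) auto
  then show ?thesis
    using AE_space
  proof eventually_elim
    case (elim \<omega>)
    then show ?case
      using sym lambda_min_sum_add_ge[of I "\<lambda>\<tau>. P \<tau> \<omega>" "\<lambda>\<tau>. mat_cond_exp M (F (\<tau> - 1)) (P \<tau>) \<omega>" r lam]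
      by auto
  qed
qed

end

lemma azuma_radius_bound:
  fixes c \<delta> lam :: real and t :: nat
  assumes "0 < c" "1 \<le> t" "0 < \<delta>" "\<delta> < 1"
    and lam: "4 * sqrt 2 * c * sqrt (real t) * sqrt (ln (4 * (real t)\<^sup>2 / \<delta>)) \<le> lam"
  shows "0 \<le> lam" and "exp (1 / 4 - lam\<^sup>2 / (8 * (2 * c)\<^sup>2 * real t)) \<le> \<delta> / (real t)\<^sup>2"
proof -
  define L where "L = ln (4 * (real t)\<^sup>2 / \<delta>)"
  have "1 \<le> (real t)\<^sup>2"
    using \<open>1 \<le> t\<close> by simp
  then have "1 < 4 * (real t)\<^sup>2 / \<delta>"
    using \<open>0 < \<delta>\<close> \<open>\<delta> < 1\<close> by (simp add: field_simps)
  then have "0 < L" unfolding L_def by simp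
  have "0 \<le> 4 * sqrt 2 * c * sqrt (real t) * sqrt L"
    using \<open>0 < c\<close> \<open>0 < L\<close> by simp
  then show "0 \<le> lam" using lam unfolding L_def by linarith
  have "(4 * sqrt 2 * c * sqrt (real t) * sqrt L)\<^sup>2 \<le> lam\<^sup>2"
    using lam \<open>0 \<le> 4 * sqrt 2 * c * sqrt (real t) * sqrt L\<close> unfolding L_def by (rule power_mono)
  then have "L \<le> lam\<^sup>2 / (8 * (2 * c)\<^sup>2 * real t)"
    using \<open>0 < c\<close> \<open>0 < L\<close> assms(2) by (simp add: field_simps)
  then have "exp (1 / 4 - lam\<^sup>2 / (8 * (2 * c)\<^sup>2 * real t)) \<le> exp (1 / 4) * exp (- L)"
    by (simp add: exp_add[symmetric])
  also have "\<dots> \<le> 4 * (\<delta> / (4 * (real t)\<^sup>2))"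
  proof (rule mult_mono)
    show "exp (1 / 4 :: real) \<le> 4"
      using exp_le exp_le_cancel_iff[of "1 / 4" 1] by linarith
    show "exp (- L) \<le> \<delta> / (4 * (real t)\<^sup>2)"
      unfolding L_def using \<open>1 < 4 * (real t)\<^sup>2 / \<delta>\<close> by (simp add: exp_minus)
  qed auto
  finally show "exp (1 / 4 - lam\<^sup>2 / (8 * (2 * c)\<^sup>2 * real t)) \<le> \<delta> / (real t)\<^sup>2" by simp
qed

theorem lemma3:
  fixes M :: "'a measure"
    and F :: "nat \<Rightarrow> 'a measure"
    and P :: "nat \<Rightarrow> 'a \<Rightarrow> real^'d^'d"
    and t :: nat and c \<phi> \<delta> lam :: real
  assumes "prob_space M"
    and "filtration (space M) F"
    and "\<And>\<tau>. subalgebra M (F \<tau>)"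
    and "t \<ge> 1"
    and "\<And>\<tau> i j. \<tau> \<in> {1..t} \<Longrightarrow> (\<lambda>\<omega>. P \<tau> \<omega> $ i $ j) \<in> borel_measurable (F \<tau>)"
    and "\<And>\<tau> \<omega>. \<tau> \<in> {1..t} \<Longrightarrow> \<omega> \<in> space M \<Longrightarrow> transpose (P \<tau> \<omega>) = P \<tau> \<omega>"
    and "c > 0"
    and "\<And>\<tau> \<omega>. \<tau> \<in> {1..t} \<Longrightarrow> \<omega> \<in> space M \<Longrightarrow> frob_norm (P \<tau> \<omega>) \<le> c"
    and "\<phi>\<^sup>2 > 0"
    and "\<And>\<tau>. \<tau> \<in> {1..t} \<Longrightarrow>
           AE \<omega> in M. lambda_min (mat_cond_exp M (F (\<tau> - 1)) (P \<tau>) \<omega>) \<ge> \<phi>\<^sup>2"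
    and "0 < \<delta>" and "\<delta> < 1"
    and "lam \<ge> 4 * sqrt 2 * c * sqrt (real t) * sqrt (ln (4 * (real t)\<^sup>2 / \<delta>))"
  shows "measure M {\<omega> \<in> space M.
            lambda_min ((\<Sum>\<tau>\<in>{1..t}. P \<tau> \<omega>) + lam *\<^sub>R mat 1) \<ge> \<phi>\<^sup>2 * real t}
         \<ge> 1 - \<delta> / (real t)\<^sup>2"
proof -
  interpret filtered_prob_space M F
    using assms(1-3) by (simp add: filtered_prob_space_def filtered_prob_space_axioms_def)
  define Bad where "Bad = {\<omega> \<in> space M. lam \<le> norm (\<Sum>\<tau>\<in>{1..t}. P \<tau> \<omega> - mat_cond_exp M (F (\<tau> - 1)) (P \<tau>) \<omega>)}"
  define Good where "Good = {\<omega> \<in> space M. \<phi>\<^sup>2 * t \<le> lambda_min ((\<Sum>\<tau>\<in>{1..t}. P \<tau> \<omega>) + lam *\<^sub>R mat 1)}"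
  have P_meas: "\<And>\<tau> i j. \<tau> \<in> {1..t} \<Longrightarrow> (\<lambda>\<omega>. P \<tau> \<omega> $ i $ j) \<in> borel_measurable M"
    using assms(5) by (rule measurable_F_imp_M)
  have D: "bounded_martingale_differences t (2 * c) (\<lambda>\<tau> \<omega>. P \<tau> \<omega> - mat_cond_exp M (F (\<tau> - 1)) (P \<tau>) \<omega>)"
    using assms(5,8) by (intro bounded_martingale_differences_cond_exp_residuals) (auto simp: frob_norm_eq_norm)
  note radius = azuma_radius_bound[OF assms(7,4,11,12,13)]
  have "Bad \<in> sets M"
    using measurable_F_imp_M[OF borel_measurable_martingale_sum[OF D]] unfolding Bad_def by measurable
  have "Good \<in> sets M"
    unfolding Good_def using P_meas assms(6)
    by (intro sets_lambda_min_ge) (auto simp: symmetric_matrix_iff mat_def intro!: sum.cong)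
  have "prob Bad \<le> \<delta> / (real t)\<^sup>2"
    using prob_norm_martingale_sum_ge_le[OF D radius(1)] radius(2) unfolding Bad_def by simp
  moreover have "prob (space M - Bad) \<le> prob Good"
  proof (rule finite_measure_mono_AE[OF _ \<open>Good \<in> sets M\<close>])
    have "AE \<omega> in M. norm (\<Sum>\<tau>\<in>{1..t}. P \<tau> \<omega> - mat_cond_exp M (F (\<tau> - 1)) (P \<tau>) \<omega>) \<le> lam \<longrightarrow>
        \<phi>\<^sup>2 * card {1..t} \<le> lambda_min ((\<Sum>\<tau>\<in>{1..t}. P \<tau> \<omega>) + lam *\<^sub>R mat 1)"
      by (rule AE_lambda_min_sum_ge) (use P_meas assms(6,10) in auto)
    then show "AE \<omega> in M. \<omega> \<in> space M - Bad \<longrightarrow> \<omega> \<in> Good"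
      by eventually_elim (auto simp: Bad_def Good_def)
  qed
  ultimately show ?thesis
    using prob_compl[OF \<open>Bad \<in> sets M\<close>] unfolding Good_def by linarith
qed

end
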